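(* Let $R$ be a commutative ring with $\mathbb{Q}\subseteq R$, $\mathcal{A}$ a commutative unital $R$-algebra, and $\mathcal{E}$ a finitely generated projective $\mathcal{A}$-module with a symmetric, strongly nondegenerate, full $\mathcal{A}$-bilinear form $\langle\cdot,\cdot\rangle$. Let $\mathsf{C}_1\in\mathcal{C}^r(\mathcal{E})$ and $\mathsf{C}_2\in\mathcal{C}^s(\mathcal{E})$ with $r,s\ge1$. Then for all $x_1,\dots,x_{r+s-1}\in\mathcal{E}$: $$(\mathsf{C}_1\wedge\mathsf{C}_2)(x_1,\dots,x_{r+s-1})=(-1)^{rs}\sum_{\pi\in\mathrm{Sh}(r,s-1)}\operatorname{sign}(\pi)\,\langle\mathsf{C}_1(x_{\pi(1)},\dots,x_{\pi(r-1)}),x_{\pi(r)}\rangle\,\mathsf{C}_2(x_{\pi(r+1)},\dots,x_{\pi(r+s-1)})$$ $$\qquad+\sum_{\pi\in\mathrm{Sh}(s,r-1)}\operatorname{sign}(\pi)\,\langle\mathsf{C}_2(x_{\pi(1)},\dots,x_{\pi(s-1)}),x_{\pi(s)}\rangle\,\mathsf{C}_1(x_{\pi(s+1)},\dots,x_{\pi(r+s-1)}).$$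
   Context: Strongly nondegenerate: $\mathcal{E}\to\operatorname{Hom}_{\mathcal{A}}(\mathcal{E},\mathcal{A})$ is an isomorphism. Full: every $a\in\mathcal{A}$ is a finite sum $\sum_i\langle x_i,y_i\rangle$. $\operatorname{Der}(\mathcal{A})$: $R$-linear derivations of $\mathcal{A}$. $\mathcal{C}^0(\mathcal{E})=\mathcal{A}$ and $\mathcal{C}^1(\mathcal{E})=\mathcal{E}$. An element of $\mathcal{C}^1$ is regarded as a map with zero arguments; for $y\in\mathcal{E}$, $y()=y$. For $r\ge2$, $\mathcal{C}^r(\mathcal{E})$ is the set of $\mathsf{C}\in\operatorname{Hom}_R(\mathcal{E}^{\otimes_R(r-1)},\mathcal{E})$ admitting an $R$-multilinear symbol $\sigma_{\mathsf{C}}:\mathcal{E}^{\otimes(r-2)}\to\operatorname{Der}(\mathcal{A})$ with two properties: (1) $\sigma_{\mathsf{C}}(x_1,\dots,x_{r-2})\langle u,w\rangle=\langle\mathsf{C}(x_1,\dots,x_{r-2},u),w\rangle+\langle u,\mathsf{C}(x_1,\dots,x_{r-2},w)\rangle$; (2) for $r\ge3$ and $1\le i\le r-2$, $\langle\mathsf{C}(\dots,x_i,x_{i+1},\dots)+\mathsf{C}(\dots,x_{i+1},x_i,\dots),u\rangle=\sigma_{\mathsf{C}}(x_1,\dots,\widehat{x_i},\widehat{x_{i+1}},\dots,x_{r-1},u)\langle x_i,x_{i+1}\rangle$. $i_x\mathsf{C}$ inserts $x$ in the first argument. $[\cdot,\cdot]$ is the unique $R$-bilinear graded skew-symmetric map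 $\mathcal{C}^r\times\mathcal{C}^s\to\mathcal{C}^{r+s-2}$ with: - $[a,b]=0$ and $[a,x]=0=[x,a]$; - $[x,y]=\langle x,y\rangle$; - $[\mathsf{D},a]=\sigma_{\mathsf{D}}(a)=-[a,\mathsf{D}]$ for $\mathsf{D}\in\mathcal{C}^2$; - $[\mathsf{C},x]=i_x\mathsf{C}=(-1)^{r+1}[x,\mathsf{C}]$ for $\mathsf{C}\in\mathcal{C}^r$ with $r\ge2$; - $[[\mathsf{C}_1,\mathsf{C}_2],x]=(-1)^s[[\mathsf{C}_1,x],\mathsf{C}_2]+[\mathsf{C}_1,[\mathsf{C}_2,x]]$. $\wedge$ is the unique degree-$0$ $R$-bilinear product with $a\wedge b=ab$, $a\wedge x=ax=x\wedge a$, and $[\mathsf{C}_1\wedge\mathsf{C}_2,x]=(-1)^s[\mathsf{C}_1,x]\wedge\mathsf{C}_2+\mathsf{C}_1\wedge[\mathsf{C}_2,x]$. $\mathrm{Sh}(p,q)$ denotes the set of $(p,q)$-shuffles: permutations $\pi$ of $\{1,\dots,p+q\}$ with $\pi(1)<\dots<\pi(p)$ and $\pi(p+1)<\dots<\pi(p+q)$. *)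

theory Defs
  imports Complex_Main "HOL-Combinatorics.Permutations"
begin

text \<open>The R-algebra structure of A is given by a unital ring homomorphism phi : R -> A;
  the A-module structure of E by a scalar action sc (library locale module).
  R-linearity of a map on E means linearity w.r.t. the scalars sc (phi c).\<close>

definition contains_rationals :: "'r::comm_ring_1 itself \<Rightarrow> bool" where
  "contains_rationals _ \<longleftrightarrow> (\<forall>n::nat. n \<noteq> 0 \<longrightarrow> (\<exists>u::'r. of_nat n * u = 1))"

definition unital_ring_hom :: "('r::comm_ring_1 \<Rightarrow> 'a::comm_ring_1) \<Rightarrow> bool" where
  "unital_ring_hom phi \<longleftrightarrow> phi 1 = 1 \<and> (\<forall>x y. phi (x + y) = phi x + phi y)
      \<and> (\<forall>x y. phi (x * y) = phi x * phi y)"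

definition A_linear_functional :: "('a::comm_ring_1 \<Rightarrow> 'e::ab_group_add \<Rightarrow> 'e) \<Rightarrow> ('e \<Rightarrow> 'a) \<Rightarrow> bool" where
  "A_linear_functional sc f \<longleftrightarrow> (\<forall>a x y. f (sc a x + y) = a * f x + f y)"

text \<open>Finitely generated projective: E is a direct summand of A^n, expressed by a finite
  dual basis (e_i, f_i), i.e. maps E -> A^n, x |-> (f_i x), and A^n -> E, (a_i) |-> sum a_i e_i
  composing to the identity of E.\<close>
definition fg_projective :: "('a::comm_ring_1 \<Rightarrow> 'e::ab_group_add \<Rightarrow> 'e) \<Rightarrow> bool" where
  "fg_projective sc \<longleftrightarrow> (\<exists>(n::nat) (e::nat \<Rightarrow> 'e) (f::nat \<Rightarrow> 'e \<Rightarrow> 'a).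
      (\<forall>i<n. A_linear_functional sc (f i)) \<and> (\<forall>x. x = (\<Sum>i<n. sc (f i x) (e i))))"

definition A_bilinear :: "('a::comm_ring_1 \<Rightarrow> 'e::ab_group_add \<Rightarrow> 'e) \<Rightarrow> ('e \<Rightarrow> 'e \<Rightarrow> 'a) \<Rightarrow> bool" where
  "A_bilinear sc B \<longleftrightarrow> (\<forall>a x y z. B (sc a x + y) z = a * B x z + B y z
                                 \<and> B z (sc a x + y) = a * B z x + B z y)"

definition symmetric_form :: "('e \<Rightarrow> 'e \<Rightarrow> 'a) \<Rightarrow> bool" where
  "symmetric_form B \<longleftrightarrow> (\<forall>x y. B x y = B y x)"

definition strongly_nondegenerate :: "('a::comm_ring_1 \<Rightarrow> 'e::ab_group_add \<Rightarrow> 'e) \<Rightarrow> ('e \<Rightarrow> 'e \<Rightarrow> 'a) \<Rightarrow> bool" where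
  "strongly_nondegenerate sc B \<longleftrightarrow> inj B \<and> range B = {f. A_linear_functional sc f}"

definition full_form :: "('e \<Rightarrow> 'e \<Rightarrow> 'a::comm_ring_1) \<Rightarrow> bool" where
  "full_form B \<longleftrightarrow> (\<forall>a. \<exists>(n::nat) (x::nat \<Rightarrow> 'e) (y::nat \<Rightarrow> 'e). a = (\<Sum>i<n. B (x i) (y i)))"

definition R_derivation :: "('r::comm_ring_1 \<Rightarrow> 'a::comm_ring_1) \<Rightarrow> ('a \<Rightarrow> 'a) \<Rightarrow> bool" where
  "R_derivation phi D \<longleftrightarrow> (\<forall>a b. D (a + b) = D a + D b) \<and> (\<forall>c a. D (phi c * a) = phi c * D a)
      \<and> (\<forall>a b. D (a * b) = a * D b + D a * b)"

text \<open>R-multilinear maps E^k -> E, represented as functions on lists (only lists of length k matter).\<close>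
definition R_multilinear_E :: "('r::comm_ring_1 \<Rightarrow> 'a::comm_ring_1) \<Rightarrow> ('a \<Rightarrow> 'e::ab_group_add \<Rightarrow> 'e)
      \<Rightarrow> nat \<Rightarrow> ('e list \<Rightarrow> 'e) \<Rightarrow> bool" where
  "R_multilinear_E phi sc k C \<longleftrightarrow> (\<forall>xs. length xs = k \<longrightarrow> (\<forall>i<k. \<forall>u v c.
      C (xs[i := u + v]) = C (xs[i := u]) + C (xs[i := v])
    \<and> C (xs[i := sc (phi c) u]) = sc (phi c) (C (xs[i := u]))))"

text \<open>R-multilinear maps E^k -> Der(A) (R-module structure of Der(A) pointwise).\<close>
definition R_multilinear_Der :: "('r::comm_ring_1 \<Rightarrow> 'a::comm_ring_1) \<Rightarrow> ('a \<Rightarrow> 'e::ab_group_add \<Rightarrow> 'e)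
      \<Rightarrow> nat \<Rightarrow> ('e list \<Rightarrow> 'a \<Rightarrow> 'a) \<Rightarrow> bool" where
  "R_multilinear_Der phi sc k S \<longleftrightarrow> (\<forall>xs. length xs = k \<longrightarrow> R_derivation phi (S xs)) \<and>
    (\<forall>xs. length xs = k \<longrightarrow> (\<forall>i<k. \<forall>u v c a.
      S (xs[i := u + v]) a = S (xs[i := u]) a + S (xs[i := v]) a
    \<and> S (xs[i := sc (phi c) u]) a = phi c * S (xs[i := u]) a))"

text \<open>Membership in C^r(E) for r >= 1. An element of C^r is represented by a function
  C :: 'e list => 'e, evaluated on lists of length r - 1. For r = 1 the element of
  C^1 = E is C [] (a map with zero arguments).
  Positions are 0-indexed: swapping positions i, i+1 with i+1 < r-1.\<close>
definition in_C :: "('r::comm_ring_1 \<Rightarrow> 'a::comm_ring_1) \<Rightarrow> ('a \<Rightarrow> 'e::ab_group_add \<Rightarrow> 'e)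
      \<Rightarrow> ('e \<Rightarrow> 'e \<Rightarrow> 'a) \<Rightarrow> nat \<Rightarrow> ('e list \<Rightarrow> 'e) \<Rightarrow> bool" where
  "in_C phi sc B r C \<longleftrightarrow> r = 1 \<or> (r \<ge> 2 \<and> R_multilinear_E phi sc (r - 1) C \<and>
     (\<exists>\<sigma>. R_multilinear_Der phi sc (r - 2) \<sigma>
        \<and> (\<forall>xs u w. length xs = r - 2 \<longrightarrow>
              \<sigma> xs (B u w) = B (C (xs @ [u])) w + B u (C (xs @ [w])))
        \<and> (\<forall>xs u i. length xs = r - 1 \<longrightarrow> i + 1 < r - 1 \<longrightarrow>
              B (C xs + C (xs[i := xs ! (i+1), i+1 := xs ! i])) u
                = \<sigma> (take i xs @ drop (i+2) xs @ [u]) (B (xs ! i) (xs ! (i+1))))))"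

text \<open>The wedge product C1 /\ C2 of C1 in C^r, C2 in C^s (r, s >= 1), evaluated on its
  r+s-1 arguments, defined by the characterizing recursion
  [C1 /\ C2, x] = (-1)^s [C1,x] /\ C2 + C1 /\ [C2,x] (with [C,x] = i_x C for degree >= 2,
  [y,x] = <y,x> for y in E, and a /\ C = a C = C /\ a for a in A = C^0, which follows from
  the characterization). (C1 /\ C2)(x # xs) = [C1 /\ C2, x](xs).\<close>
fun wedge_ev :: "('a::comm_ring_1 \<Rightarrow> 'e::ab_group_add \<Rightarrow> 'e) \<Rightarrow> ('e \<Rightarrow> 'e \<Rightarrow> 'a) \<Rightarrow> nat \<Rightarrow> nat
     \<Rightarrow> ('e list \<Rightarrow> 'e) \<Rightarrow> ('e list \<Rightarrow> 'e) \<Rightarrow> 'e list \<Rightarrow> 'e" where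
  "wedge_ev sc B r s C1 C2 [] = 0"
| "wedge_ev sc B r s C1 C2 (x # xs) =
     sc ((-1) ^ s) (if r \<le> 1 then sc (B (C1 []) x) (C2 xs)
                    else wedge_ev sc B (r - 1) s (\<lambda>ys. C1 (x # ys)) C2 xs)
   + (if s \<le> 1 then sc (B (C2 []) x) (C1 xs)
      else wedge_ev sc B r (s - 1) C1 (\<lambda>ys. C2 (x # ys)) xs)"

definition is_shuffle :: "nat \<Rightarrow> nat \<Rightarrow> (nat \<Rightarrow> nat) \<Rightarrow> bool" where
  "is_shuffle p q \<pi> \<longleftrightarrow> \<pi> permutes {..<p+q} \<and> strict_mono_on {..<p} \<pi> \<and> strict_mono_on {p..<p+q} \<pi>"

end

theory Submission
  imports Defs
begin

text \<open>Both sides obey the same recursion in the first argument x. A shuffle \<pi> in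
  Sh(p,q) reads x in the slot \<pi>\<inverse>(0), which by monotonicity on the two blocks is
  either the first slot of the first block (\<pi> 0 = 0) or the first slot of the second block
  (\<pi> p = 0). Deleting x is a bijection onto Sh(p-1,q), resp. Sh(p,q-1), changing the sign
  by 1, resp. by (-1)^p, the sign of the cycle moving slot p to the front. For the shuffle sums
  this is exactly the defining recursion [C1 \<and> C2, x] = (-1)^s [C1, x] \<and> C2 + C1 \<and> [C2, x]
  of the wedge product.\<close>

definition shift_perm :: "(nat \<Rightarrow> nat) \<Rightarrow> nat \<Rightarrow> nat" where
  "shift_perm \<sigma> = (\<lambda>j. if j = 0 then 0 else Suc (\<sigma> (j - 1)))"

definition cycle_upto :: "nat \<Rightarrow> nat \<Rightarrow> nat" where
  "cycle_upto p = (\<lambda>j. if j < p then Suc j else if j = p then 0 else j)"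

lemma shift_perm_0 [simp]: "shift_perm \<sigma> 0 = 0"
  and shift_perm_Suc [simp]: "shift_perm \<sigma> (Suc j) = Suc (\<sigma> j)"
  by (auto simp: shift_perm_def)

lemma shift_perm_comp_cycle_upto:
  "(shift_perm \<sigma> \<circ> cycle_upto p) j =
     (if j < p then Suc (\<sigma> j) else if j = p then 0 else Suc (\<sigma> (j - 1)))"
  by (auto simp: shift_perm_def cycle_upto_def)

lemma shift_perm_eq_map_permutation:
  assumes "\<sigma> permutes {..<m}"
  shows "shift_perm \<sigma> = map_permutation {..<m} Suc \<sigma>"
proof
  fix j
  show "shift_perm \<sigma> j = map_permutation {..<m} Suc \<sigma> j"
  proof (cases j)
    case (Suc k)
    show ?thesis
    proof (cases "k < m")
      case True
      then have "inv_into {..<m} Suc (Suc k) = k" by (simp add: inv_into_f_f)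
      then show ?thesis using Suc True by (auto simp: map_permutation_def restrict_id_def)
    next
      case False
      then have "\<sigma> k = k" using assms by (simp add: permutes_not_in)
      then show ?thesis using Suc False by (auto simp: map_permutation_def restrict_id_def)
    qed
  qed (auto simp: map_permutation_def restrict_id_def)
qed

lemma shift_perm_permutes:
  assumes "\<sigma> permutes {..<m}"
  shows "shift_perm \<sigma> permutes {..<Suc m}"
proof -
  have "map_permutation {..<m} Suc \<sigma> permutes Suc ` {..<m}"
    by (rule map_permutation_permutes) (use assms in auto)
  then show ?thesis
    unfolding shift_perm_eq_map_permutation[OF assms] by (rule permutes_subset) auto
qed

lemma sign_shift_perm: "\<sigma> permutes {..<m} \<Longrightarrow> sign (shift_perm \<sigma>) = sign \<sigma>"
  using shift_perm_eq_map_permutation sign_map_permutation[of Suc "{..<m}" \<sigma>] by auto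

lemma permutes_if_shift_perm_permutes:
  assumes shifted: "shift_perm \<sigma> permutes {..<Suc m}" and fixed: "\<And>j. m \<le> j \<Longrightarrow> \<sigma> j = j"
  shows "\<sigma> permutes {..<m}"
proof -
  have "inj \<sigma>"
  proof (rule injI)
    fix a b assume "\<sigma> a = \<sigma> b"
    then have "shift_perm \<sigma> (Suc a) = shift_perm \<sigma> (Suc b)" by simp
    then have "Suc a = Suc b" using permutes_inj[OF shifted] by (rule injD[rotated])
    then show "a = b" by simp
  qed
  moreover have "y \<in> range \<sigma>" for y
  proof -
    obtain x where x: "shift_perm \<sigma> x = Suc y"
      using permutes_surj[OF shifted] by (metis surjD)
    then obtain k where "x = Suc k" by (cases x) auto
    with x show ?thesis by auto
  qed
  ultimately show ?thesis
    unfolding permutes_def using fixed by (metis injD lessThan_iff not_less rangeE)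
qed

lemma cycle_upto_Suc: "cycle_upto (Suc p) = cycle_upto p \<circ> Transposition.transpose p (Suc p)"
  by (auto simp: fun_eq_iff cycle_upto_def Transposition.transpose_def)

lemma cycle_upto_permutes_sign: "cycle_upto p permutes {..p} \<and> sign (cycle_upto p) = (-1) ^ p"
proof (induction p)
  case 0
  have "cycle_upto 0 = id" by (auto simp: fun_eq_iff cycle_upto_def)
  then show ?case by (simp add: permutes_id id_def)
next
  case (Suc p)
  have swap: "Transposition.transpose p (Suc p) permutes {..Suc p}"
    by (rule permutes_swap_id) auto
  have cyc: "cycle_upto p permutes {..Suc p}"
    using Suc.IH by (auto intro: permutes_subset)
  have "cycle_upto (Suc p) permutes {..Suc p}"
    unfolding cycle_upto_Suc by (rule permutes_compose[OF swap cyc])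
  moreover have "sign (cycle_upto (Suc p)) = (-1) ^ Suc p"
    unfolding cycle_upto_Suc using Suc.IH cyc swap
    by (subst sign_compose) (auto intro: permutes_imp_permutation simp: sign_swap_id)
  ultimately show ?case by simp
qed

lemma cycle_upto_permutes: "p < n \<Longrightarrow> cycle_upto p permutes {..<n}"
  using cycle_upto_permutes_sign[of p] by (auto intro: permutes_subset)

lemma sign_shift_perm_comp_cycle_upto:
  "\<sigma> permutes {..<m} \<Longrightarrow> sign (shift_perm \<sigma> \<circ> cycle_upto p) = sign \<sigma> * (-1) ^ p"
  using cycle_upto_permutes_sign[of p] shift_perm_permutes[of \<sigma> m]
  by (subst sign_compose) (auto intro: permutes_imp_permutation simp: sign_shift_perm)

lemma inj_shift_perm: "inj shift_perm"
proof (rule injI)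
  fix \<sigma> \<tau> assume "shift_perm \<sigma> = shift_perm \<tau>"
  then have "shift_perm \<sigma> (Suc j) = shift_perm \<tau> (Suc j)" for j by simp
  then show "\<sigma> = \<tau>" by (auto simp: fun_eq_iff)
qed

lemma inj_shift_perm_comp_cycle_upto: "inj (\<lambda>\<sigma>. shift_perm \<sigma> \<circ> cycle_upto p)"
proof (rule injI)
  fix \<sigma> \<tau> assume eq: "shift_perm \<sigma> \<circ> cycle_upto p = shift_perm \<tau> \<circ> cycle_upto p"
  show "\<sigma> = \<tau>"
  proof
    fix j
    show "\<sigma> j = \<tau> j"
      using fun_cong[OF eq, of j] fun_cong[OF eq, of "Suc j"]
      by (cases "j < p") (simp_all only: shift_perm_comp_cycle_upto, simp_all)
  qed
qed

lemma is_shuffle_shift_perm: "is_shuffle p q \<sigma> \<Longrightarrow> is_shuffle (Suc p) q (shift_perm \<sigma>)"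
  unfolding is_shuffle_def
proof (elim conjE, intro conjI strict_mono_onI)
  assume perm: "\<sigma> permutes {..<p + q}" and mono1: "strict_mono_on {..<p} \<sigma>"
    and mono2: "strict_mono_on {p..<p + q} \<sigma>"
  show "shift_perm \<sigma> permutes {..<Suc p + q}" using shift_perm_permutes[OF perm] by simp
  show "shift_perm \<sigma> a < shift_perm \<sigma> b" if "a \<in> {..<Suc p}" "b \<in> {..<Suc p}" "a < b" for a b
    using mono1 that by (cases a; cases b) (auto simp: strict_mono_on_def)
  show "shift_perm \<sigma> a < shift_perm \<sigma> b"
    if "a \<in> {Suc p..<Suc p + q}" "b \<in> {Suc p..<Suc p + q}" "a < b" for a b
    using mono2 that by (cases a; cases b) (auto simp: strict_mono_on_def)
qed

lemma is_shuffle_shift_perm_comp_cycle_upto: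
  "is_shuffle p q \<sigma> \<Longrightarrow> is_shuffle p (Suc q) (shift_perm \<sigma> \<circ> cycle_upto p)"
  unfolding is_shuffle_def
proof (elim conjE, intro conjI strict_mono_onI)
  assume perm: "\<sigma> permutes {..<p + q}" and mono1: "strict_mono_on {..<p} \<sigma>"
    and mono2: "strict_mono_on {p..<p + q} \<sigma>"
  show "shift_perm \<sigma> \<circ> cycle_upto p permutes {..<p + Suc q}"
    using permutes_compose[OF cycle_upto_permutes shift_perm_permutes[OF perm]] by simp
  show "(shift_perm \<sigma> \<circ> cycle_upto p) a < (shift_perm \<sigma> \<circ> cycle_upto p) b"
    if "a \<in> {..<p}" "b \<in> {..<p}" "a < b" for a b
    using that strict_mono_onD[OF mono1, of a b]
    by (simp only: shift_perm_comp_cycle_upto) simp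
  show "(shift_perm \<sigma> \<circ> cycle_upto p) a < (shift_perm \<sigma> \<circ> cycle_upto p) b"
    if "a \<in> {p..<p + Suc q}" "b \<in> {p..<p + Suc q}" "a < b" for a b
  proof (cases "a = p")
    case False
    with that have "\<sigma> (a - 1) < \<sigma> (b - 1)"
      by (intro strict_mono_onD[OF mono2]) auto
    with False that show ?thesis by (simp only: shift_perm_comp_cycle_upto) simp
  qed (use that in \<open>simp only: shift_perm_comp_cycle_upto, simp\<close>)
qed

lemma is_shuffle_preimage_zero:
  assumes "is_shuffle p q \<rho>" "0 < p + q"
  shows "(0 < p \<and> \<rho> 0 = 0) \<or> (0 < q \<and> \<rho> p = 0)"
proof -
  have perm: "\<rho> permutes {..<p+q}" and mono1: "strict_mono_on {..<p} \<rho>"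
    and mono2: "strict_mono_on {p..<p + q} \<rho>" using assms(1) by (auto simp: is_shuffle_def)
  have "0 \<in> \<rho> ` {..<p+q}" using permutes_image[OF perm] assms(2) by auto
  then obtain k where k: "k < p + q" "\<rho> k = 0" by auto
  show ?thesis
  proof (cases "k < p")
    case True
    then have "k = 0" using k strict_mono_onD[OF mono1, of 0 k] by (cases "k = 0") auto
    then show ?thesis using True k by auto
  next
    case False
    then have "k = p" using k strict_mono_onD[OF mono2, of p k] by (cases "k = p") auto
    then show ?thesis using k by auto
  qed
qed

lemma shift_perm_of_is_shuffle_fixing_zero:
  assumes shuffle: "is_shuffle (Suc p) q \<rho>" and zero: "\<rho> 0 = 0"
  obtains \<sigma> where "is_shuffle p q \<sigma>" "\<rho> = shift_perm \<sigma>"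
proof -
  have perm: "\<rho> permutes {..<Suc p+q}" and mono1: "strict_mono_on {..<Suc p} \<rho>"
    and mono2: "strict_mono_on {Suc p..<Suc p + q} \<rho>" using shuffle by (auto simp: is_shuffle_def)
  have nonzero: "\<rho> j \<noteq> 0" if "j \<noteq> 0" for j
    using permutes_inj[OF perm] zero that by (metis injD)
  define \<sigma> where "\<sigma> = (\<lambda>j. if j < p + q then \<rho> (Suc j) - 1 else j)"
  have eq: "\<rho> = shift_perm \<sigma>"
  proof
    fix j
    show "\<rho> j = shift_perm \<sigma> j"
    proof (cases j)
      case (Suc k)
      show ?thesis
      proof (cases "k < p + q")
        case True then show ?thesis using Suc nonzero[of j] by (simp add: \<sigma>_def)
      next
        case False
        then have "\<rho> (Suc k) = Suc k" using perm by (intro permutes_not_in) auto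
        then show ?thesis using Suc False by (simp add: \<sigma>_def)
      qed
    qed (simp add: zero)
  qed
  have "\<sigma> permutes {..<p+q}"
    by (rule permutes_if_shift_perm_permutes) (use perm eq in \<open>auto simp: \<sigma>_def\<close>)
  moreover have "strict_mono_on {..<p} \<sigma>" "strict_mono_on {p..<p+q} \<sigma>"
    using nonzero[of "Suc _"] mono1 mono2
    by (auto simp: strict_mono_on_def \<sigma>_def Suc_le_eq intro!: diff_less_mono)
  ultimately show ?thesis using that eq by (auto simp: is_shuffle_def)
qed

lemma shift_perm_comp_cycle_of_is_shuffle_to_zero:
  assumes shuffle: "is_shuffle p (Suc q) \<rho>" and zero: "\<rho> p = 0"
  obtains \<sigma> where "is_shuffle p q \<sigma>" "\<rho> = shift_perm \<sigma> \<circ> cycle_upto p"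
proof -
  have perm: "\<rho> permutes {..<p+Suc q}" and mono1: "strict_mono_on {..<p} \<rho>"
    and mono2: "strict_mono_on {p..<p + Suc q} \<rho>" using shuffle by (auto simp: is_shuffle_def)
  have nonzero: "\<rho> j \<noteq> 0" if "j \<noteq> p" for j
    using permutes_inj[OF perm] zero that by (metis injD)
  define \<sigma> where "\<sigma> = (\<lambda>j. if j < p then \<rho> j - 1 else if j < p + q then \<rho> (Suc j) - 1 else j)"
  have eq: "\<rho> = shift_perm \<sigma> \<circ> cycle_upto p"
  proof
    fix j
    consider "j < p" | "j = p" | k where "j = Suc k" "p \<le> k" "k < p + q"
      | k where "j = Suc k" "p + q \<le> k"
    proof (cases "p < j")
      case True
      then obtain k where "j = Suc k" "p \<le> k" by (cases j) auto
      then show ?thesis using that(3,4) by (cases "k < p + q") auto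
    qed (use that(1,2) in linarith)
    then show "\<rho> j = (shift_perm \<sigma> \<circ> cycle_upto p) j"
    proof cases
      case 4
      then have "\<rho> j = j" using perm by (intro permutes_not_in) auto
      with 4 show ?thesis by (simp only: shift_perm_comp_cycle_upto) (simp add: \<sigma>_def)
    qed (use nonzero zero in \<open>simp_all only: shift_perm_comp_cycle_upto, simp_all add: \<sigma>_def\<close>)
  qed
  have cycle: "cycle_upto p permutes {..<Suc (p+q)}"
    by (rule cycle_upto_permutes) simp
  have "shift_perm \<sigma> = \<rho> \<circ> inv (cycle_upto p)"
    using eq permutes_inverses(1)[OF cycle] by (auto simp: fun_eq_iff)
  then have "shift_perm \<sigma> permutes {..<Suc (p+q)}"
    using permutes_compose[OF permutes_inv[OF cycle], of \<rho>] perm by simp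
  then have "\<sigma> permutes {..<p+q}"
    by (rule permutes_if_shift_perm_permutes) (auto simp: \<sigma>_def)
  moreover have "strict_mono_on {..<p} \<sigma>" "strict_mono_on {p..<p+q} \<sigma>"
    using nonzero mono1 mono2
    by (auto simp: strict_mono_on_def \<sigma>_def Suc_le_eq intro!: diff_less_mono)
  ultimately show ?thesis using that eq by (auto simp: is_shuffle_def)
qed

lemma shuffles_fixing_zero:
  "{\<rho>. is_shuffle (Suc p) q \<rho> \<and> \<rho> 0 = 0} = shift_perm ` {\<sigma>. is_shuffle p q \<sigma>}"
  using is_shuffle_shift_perm shift_perm_of_is_shuffle_fixing_zero by fastforce

lemma shuffles_to_zero:
  "{\<rho>. is_shuffle p (Suc q) \<rho> \<and> \<rho> p = 0} =
     (\<lambda>\<sigma>. shift_perm \<sigma> \<circ> cycle_upto p) ` {\<sigma>. is_shuffle p q \<sigma>}"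
proof -
  have "(shift_perm \<sigma> \<circ> cycle_upto p) p = 0" for \<sigma>
    by (simp only: shift_perm_comp_cycle_upto) simp
  then show ?thesis
    using is_shuffle_shift_perm_comp_cycle_upto shift_perm_comp_cycle_of_is_shuffle_to_zero
    by fastforce
qed

lemma finite_shuffles: "finite {\<pi>. is_shuffle p q \<pi>}"
  by (rule finite_subset[OF _ finite_permutations[of "{..<p+q}"]]) (auto simp: is_shuffle_def)

definition shuffle_term :: "('a::comm_ring_1 \<Rightarrow> 'e::ab_group_add \<Rightarrow> 'e) \<Rightarrow> nat \<Rightarrow> nat
    \<Rightarrow> ('e list \<Rightarrow> 'e list \<Rightarrow> 'e) \<Rightarrow> 'e list \<Rightarrow> (nat \<Rightarrow> nat) \<Rightarrow> 'e" where
  "shuffle_term sc p q F ys \<pi> = sc (of_int (sign \<pi>))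
      (F (map (\<lambda>j. ys ! \<pi> j) [0..<p]) (map (\<lambda>j. ys ! \<pi> j) [p..<p+q]))"

definition shuffle_sum :: "('a::comm_ring_1 \<Rightarrow> 'e::ab_group_add \<Rightarrow> 'e) \<Rightarrow> nat \<Rightarrow> nat
    \<Rightarrow> ('e list \<Rightarrow> 'e list \<Rightarrow> 'e) \<Rightarrow> 'e list \<Rightarrow> 'e" where
  "shuffle_sum sc p q F ys = (\<Sum>\<pi>\<in>{\<pi>. is_shuffle p q \<pi>}. shuffle_term sc p q F ys \<pi>)"

lemma map_upt_Suc_shift: "map f [Suc m..<Suc n] = map (\<lambda>j. f (Suc j)) [m..<n]"
  unfolding map_Suc_upt[symmetric] map_map comp_def ..

lemma shuffle_term_shift_perm:
  assumes "\<sigma> permutes {..<p + q}"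
  shows "shuffle_term sc (Suc p) q F (x # xs) (shift_perm \<sigma>) =
    shuffle_term sc p q (\<lambda>a b. F (x # a) b) xs \<sigma>"
proof -
  have "map (\<lambda>j. (x # xs) ! shift_perm \<sigma> j) [0..<Suc p] = x # map (\<lambda>j. xs ! \<sigma> j) [0..<p]"
    unfolding upt_conv_Cons[OF zero_less_Suc] list.map
    by (simp only: One_nat_def map_upt_Suc_shift) simp
  moreover have "map (\<lambda>j. (x # xs) ! shift_perm \<sigma> j) [Suc p..<Suc p + q]
      = map (\<lambda>j. xs ! \<sigma> j) [p..<p + q]"
    unfolding add_Suc by (simp only: map_upt_Suc_shift) simp
  ultimately show ?thesis
    unfolding shuffle_term_def sign_shift_perm[OF assms] by simp
qed

lemma shuffle_term_shift_perm_comp_cycle_upto: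
  assumes "module sc" "\<sigma> permutes {..<p + q}"
  shows "shuffle_term sc p (Suc q) F (x # xs) (shift_perm \<sigma> \<circ> cycle_upto p) =
    sc ((-1) ^ p) (shuffle_term sc p q (\<lambda>a b. F a (x # b)) xs \<sigma>)"
proof -
  let ?\<rho> = "shift_perm \<sigma> \<circ> cycle_upto p"
  have first_block: "map (\<lambda>j. (x # xs) ! ?\<rho> j) [0..<p] = map (\<lambda>j. xs ! \<sigma> j) [0..<p]"
    by (rule map_cong[OF refl]) (simp only: shift_perm_comp_cycle_upto, simp)
  have "[p..<p + Suc q] = p # [Suc p..<Suc (p + q)]" by (simp add: upt_conv_Cons)
  then have "map (\<lambda>j. (x # xs) ! ?\<rho> j) [p..<p + Suc q]
      = (x # xs) ! ?\<rho> p # map (\<lambda>j. (x # xs) ! ?\<rho> (Suc j)) [p..<p + q]"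
    by (simp only: list.map map_upt_Suc_shift)
  also have "\<dots> = x # map (\<lambda>j. xs ! \<sigma> j) [p..<p + q]"
    by (simp only: shift_perm_comp_cycle_upto) simp
  finally have second_block: "map (\<lambda>j. (x # xs) ! ?\<rho> j) [p..<p + Suc q] = x # map (\<lambda>j. xs ! \<sigma> j) [p..<p + q]" .
  have sign_eq: "of_int (sign ?\<rho>) = (-1) ^ p * (of_int (sign \<sigma>) :: 'a)"
    unfolding sign_shift_perm_comp_cycle_upto[OF assms(2)] by simp
  show ?thesis
    unfolding shuffle_term_def first_block second_block sign_eq module.scale_scale[OF assms(1)] ..
qed

lemma shuffle_sum_Cons:
  assumes "module sc" "0 < p + q"
  shows "shuffle_sum sc p q F (x # xs) =
     (if 0 < p then shuffle_sum sc (p - 1) q (\<lambda>a b. F (x # a) b) xs else 0)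
   + (if 0 < q then sc ((-1) ^ p) (shuffle_sum sc p (q - 1) (\<lambda>a b. F a (x # b)) xs) else 0)"
proof -
  let ?t = "shuffle_term sc p q F (x # xs)"
  define Front where "Front = {\<rho>. is_shuffle p q \<rho> \<and> 0 < p \<and> \<rho> 0 = 0}"
  define Back where "Back = {\<rho>. is_shuffle p q \<rho> \<and> 0 < q \<and> \<rho> p = 0}"
  have split: "{\<pi>. is_shuffle p q \<pi>} = Front \<union> Back"
    using is_shuffle_preimage_zero[OF _ assms(2)] unfolding Front_def Back_def by blast
  have disjoint: "Front \<inter> Back = {}"
    by (auto simp: Front_def Back_def is_shuffle_def dest!: permutes_inj dest: injD[of _ 0 p])
  have "shuffle_sum sc p q F (x # xs) = sum ?t Front + sum ?t Back"
    unfolding shuffle_sum_def split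
    using finite_shuffles[of p q] disjoint by (simp add: split sum.union_disjoint)
  moreover have "sum ?t Front = (if 0 < p then shuffle_sum sc (p - 1) q (\<lambda>a b. F (x # a) b) xs else 0)"
  proof (cases p)
    case (Suc p')
    then have "Front = shift_perm ` {\<sigma>. is_shuffle p' q \<sigma>}"
      using shuffles_fixing_zero[of p' q] by (simp add: Front_def)
    then have "sum ?t Front = (\<Sum>\<sigma>\<in>{\<sigma>. is_shuffle p' q \<sigma>}. ?t (shift_perm \<sigma>))"
      by (simp add: sum.reindex[OF inj_on_subset[OF inj_shift_perm]])
    also have "\<dots> = shuffle_sum sc p' q (\<lambda>a b. F (x # a) b) xs"
      unfolding shuffle_sum_def Suc
      by (rule sum.cong) (auto simp: is_shuffle_def shuffle_term_shift_perm)
    finally show ?thesis using Suc by simp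
  qed (simp add: Front_def)
  moreover have "sum ?t Back =
      (if 0 < q then sc ((-1) ^ p) (shuffle_sum sc p (q - 1) (\<lambda>a b. F a (x # b)) xs) else 0)"
  proof (cases q)
    case (Suc q')
    then have "Back = (\<lambda>\<sigma>. shift_perm \<sigma> \<circ> cycle_upto p) ` {\<sigma>. is_shuffle p q' \<sigma>}"
      using shuffles_to_zero[of p q'] by (simp add: Back_def)
    then have "sum ?t Back = (\<Sum>\<sigma>\<in>{\<sigma>. is_shuffle p q' \<sigma>}. ?t (shift_perm \<sigma> \<circ> cycle_upto p))"
      by (simp add: sum.reindex[OF inj_on_subset[OF inj_shift_perm_comp_cycle_upto]])
    also have "\<dots> = sc ((-1) ^ p) (shuffle_sum sc p q' (\<lambda>a b. F a (x # b)) xs)"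
      unfolding shuffle_sum_def Suc module.scale_sum_right[OF assms(1)]
      by (rule sum.cong)
        (auto simp: is_shuffle_def shuffle_term_shift_perm_comp_cycle_upto[OF assms(1)])
    finally show ?thesis using Suc by simp
  qed (simp add: Back_def)
  ultimately show ?thesis by simp
qed

lemma shuffles_0_0: "{\<pi>. is_shuffle 0 0 \<pi>} = {id}"
  by (auto simp: is_shuffle_def)

lemma shuffle_sum_0_left:
  assumes "module sc" "length ys = q"
  shows "shuffle_sum sc 0 q F ys = F [] ys"
  using assms(2)
proof (induction ys arbitrary: q F)
  case Nil
  then show ?case
    by (simp add: shuffle_sum_def shuffle_term_def shuffles_0_0 module.scale_one[OF assms(1)])
next
  case (Cons x xs)
  then show ?case
    by (subst shuffle_sum_Cons[OF assms(1)]) (auto simp: module.scale_one[OF assms(1)])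
qed

definition pair_apply :: "('a::comm_ring_1 \<Rightarrow> 'e::ab_group_add \<Rightarrow> 'e) \<Rightarrow> ('e \<Rightarrow> 'e \<Rightarrow> 'a) \<Rightarrow> nat
    \<Rightarrow> ('e list \<Rightarrow> 'e) \<Rightarrow> ('e list \<Rightarrow> 'e) \<Rightarrow> 'e list \<Rightarrow> 'e list \<Rightarrow> 'e" where
  "pair_apply sc B k C D ys zs = sc (B (C (take (k - 1) ys)) (ys ! (k - 1))) (D zs)"

lemma shuffle_sum_pair_apply_Cons:
  assumes "module sc" "1 \<le> k" "length xs + 1 = k + m"
  shows "shuffle_sum sc k m (pair_apply sc B k C D) (x # xs) =
     (if k = 1 then sc (B (C []) x) (D xs)
      else shuffle_sum sc (k - 1) m (pair_apply sc B (k - 1) (\<lambda>ys. C (x # ys)) D) xs)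
   + (if 0 < m then sc ((-1) ^ k) (shuffle_sum sc k (m - 1) (pair_apply sc B k C (\<lambda>ys. D (x # ys))) xs)
      else 0)"
proof -
  have first: "shuffle_sum sc (k - 1) m (\<lambda>a b. pair_apply sc B k C D (x # a) b) xs =
     (if k = 1 then sc (B (C []) x) (D xs)
      else shuffle_sum sc (k - 1) m (pair_apply sc B (k - 1) (\<lambda>ys. C (x # ys)) D) xs)"
  proof (cases "k = 1")
    case True
    then show ?thesis
      using assms by (simp add: shuffle_sum_0_left pair_apply_def)
  next
    case False
    then have "(\<lambda>a b. pair_apply sc B k C D (x # a) b) = pair_apply sc B (k - 1) (\<lambda>ys. C (x # ys)) D"
      using assms(2) by (auto simp: pair_apply_def fun_eq_iff take_Cons' nth_Cons')
    then show ?thesis using False by simp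
  qed
  have "(\<lambda>a b. pair_apply sc B k C D a (x # b)) = pair_apply sc B k C (\<lambda>ys. D (x # ys))"
    by (simp add: pair_apply_def fun_eq_iff)
  then show ?thesis
    using assms first by (subst shuffle_sum_Cons) auto
qed

lemma shuffle_sum_pair_apply:
  assumes "1 \<le> k"
  shows "shuffle_sum sc k m (pair_apply sc B k C D) xs =
    (\<Sum>\<pi>\<in>{\<pi>. is_shuffle k m \<pi>}.
       sc (of_int (sign \<pi>))
         (sc (B (C (map (\<lambda>j. xs ! \<pi> j) [0..<k - 1])) (xs ! \<pi> (k - 1)))
             (D (map (\<lambda>j. xs ! \<pi> j) [k..<k + m]))))"
  unfolding shuffle_sum_def shuffle_term_def pair_apply_def using assms by (simp add: take_map)

lemma neg_one_power_mult_pred_right: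
  assumes "0 < s"
  shows "(-1::'a::ring_1) ^ (r * s) * (-1) ^ r = (-1) ^ (r * (s - 1))"
proof -
  have "r * s = r * (s - 1) + r" using assms by (cases s) auto
  moreover have "(-1::'a) ^ r * (-1) ^ r = 1" by (simp flip: power_add)
  ultimately show ?thesis by (simp add: power_add mult.assoc)
qed

lemma wedge_ev_eq_shuffle_sums:
  assumes "module sc" "1 \<le> r" "1 \<le> s" "length xs = r + s - 1"
  shows "wedge_ev sc B r s C1 C2 xs =
      sc ((-1) ^ (r * s)) (shuffle_sum sc r (s - 1) (pair_apply sc B r C1 C2) xs)
    + shuffle_sum sc s (r - 1) (pair_apply sc B s C2 C1) xs"
  using assms(2-)
proof (induction xs arbitrary: r s C1 C2)
  case Nil
  then show ?case by simp
next
  case (Cons x xs)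
  note scale_simps = module.scale_right_distrib[OF assms(1)] module.scale_scale[OF assms(1)]
  let ?C1 = "\<lambda>ys. C1 (x # ys)" and ?C2 = "\<lambda>ys. C2 (x # ys)"
  let ?A1 = "if r = 1 then sc (B (C1 []) x) (C2 xs)
             else shuffle_sum sc (r - 1) (s - 1) (pair_apply sc B (r - 1) ?C1 C2) xs"
  let ?B1 = "if 0 < s - 1 then sc ((-1) ^ r) (shuffle_sum sc r (s - 1 - 1) (pair_apply sc B r C1 ?C2) xs)
             else 0"
  let ?A2 = "if s = 1 then sc (B (C2 []) x) (C1 xs)
             else shuffle_sum sc (s - 1) (r - 1) (pair_apply sc B (s - 1) ?C2 C1) xs"
  let ?B2 = "if 0 < r - 1 then sc ((-1) ^ s) (shuffle_sum sc s (r - 1 - 1) (pair_apply sc B s C2 ?C1) xs)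
             else 0"
  have sums: "shuffle_sum sc r (s - 1) (pair_apply sc B r C1 C2) (x # xs) = ?A1 + ?B1"
             "shuffle_sum sc s (r - 1) (pair_apply sc B s C2 C1) (x # xs) = ?A2 + ?B2"
    using shuffle_sum_pair_apply_Cons[OF assms(1) Cons.prems(1), of xs "s - 1" B C1 C2 x]
      shuffle_sum_pair_apply_Cons[OF assms(1) Cons.prems(2), of xs "r - 1" B C2 C1 x]
      Cons.prems by auto
  have left: "sc ((-1) ^ s) (if r \<le> 1 then sc (B (C1 []) x) (C2 xs) else wedge_ev sc B (r - 1) s ?C1 C2 xs)
      = sc ((-1) ^ (r * s)) ?A1 + ?B2"
  proof (cases "r = 1")
    case False
    then have "(-1::'a) ^ s * (-1) ^ ((r - 1) * s) = (-1) ^ (r * s)"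
      using Cons.prems(1) by (cases r) (simp_all add: power_add)
    with False Cons.prems Cons.IH[of "r - 1" s ?C1 C2] show ?thesis by (simp add: scale_simps)
  qed simp
  have right: "(if s \<le> 1 then sc (B (C2 []) x) (C1 xs) else wedge_ev sc B r (s - 1) C1 ?C2 xs)
      = sc ((-1) ^ (r * s)) ?B1 + ?A2"
  proof (cases "s = 1")
    case False
    with Cons.prems Cons.IH[of r "s - 1" C1 ?C2] show ?thesis
      by (simp add: scale_simps neg_one_power_mult_pred_right)
  qed (simp add: module.scale_zero_right[OF assms(1)])
  show ?case
    unfolding wedge_ev.simps(2) left right sums by (simp add: scale_simps add_ac)
qed

theorem mainTheorem11:
  fixes phi :: "'r::comm_ring_1 \<Rightarrow> 'a::comm_ring_1"
    and sc :: "'a \<Rightarrow> 'e::ab_group_add \<Rightarrow> 'e"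
    and B :: "'e \<Rightarrow> 'e \<Rightarrow> 'a"
    and C1 C2 :: "'e list \<Rightarrow> 'e"
    and r s :: nat
    and xs :: "'e list"
  assumes "contains_rationals TYPE('r)"
    and "unital_ring_hom phi"
    and "module sc"
    and "fg_projective sc"
    and "A_bilinear sc B"
    and "symmetric_form B"
    and "strongly_nondegenerate sc B"
    and "full_form B"
    and "r \<ge> 1" and "s \<ge> 1"
    and "in_C phi sc B r C1"
    and "in_C phi sc B s C2"
    and "length xs = r + s - 1"
  shows "wedge_ev sc B r s C1 C2 xs =
      sc ((-1) ^ (r * s))
        (\<Sum>\<pi>\<in>{\<pi>. is_shuffle r (s - 1) \<pi>}.
           sc (of_int (sign \<pi>))
             (sc (B (C1 (map (\<lambda>j. xs ! \<pi> j) [0..<r - 1])) (xs ! \<pi> (r - 1)))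
                 (C2 (map (\<lambda>j. xs ! \<pi> j) [r..<r + s - 1]))))
    + (\<Sum>\<pi>\<in>{\<pi>. is_shuffle s (r - 1) \<pi>}.
           sc (of_int (sign \<pi>))
             (sc (B (C2 (map (\<lambda>j. xs ! \<pi> j) [0..<s - 1])) (xs ! \<pi> (s - 1)))
                 (C1 (map (\<lambda>j. xs ! \<pi> j) [s..<r + s - 1]))))"
proof -
  have "r + (s - 1) = r + s - 1" "s + (r - 1) = r + s - 1" using \<open>r \<ge> 1\<close> \<open>s \<ge> 1\<close> by auto
  with wedge_ev_eq_shuffle_sums[OF \<open>module sc\<close> \<open>r \<ge> 1\<close> \<open>s \<ge> 1\<close> \<open>length xs = r + s - 1\<close>]
    shuffle_sum_pair_apply[OF \<open>r \<ge> 1\<close>, of sc "s - 1" B C1 C2 xs]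
    shuffle_sum_pair_apply[OF \<open>s \<ge> 1\<close>, of sc "r - 1" B C2 C1 xs]
  show ?thesis by simp
qed

end
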